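(* If $p=p(n)\le \log n/(25n^2)$, then asymptotically almost surely there exists a generator $s\in S$ such that neither $s$ nor $s^{-1}$ occurs in any relation of the random presentation $\Gamma(n,p)=\langle S\mid R\rangle$.
   Context: The random triangular group $\Gamma(n,p)$ is given by a presentation $\langle S\mid R\rangle$, where $|S|=n$ and $R$ contains independently, each with probability $p$, every cyclically reduced word $abc$ of length three over $S\cup S^{-1}$ ($a\neq b^{-1}$, $b\neq c^{-1}$, $c\neq a^{-1}$; distinct words are distinct candidates). Asymptotically almost surely means with probability tending to $1$ as $n\to\infty$. *)

theory Defs
  imports "HOL-Probability.Probability"
begin

text \<open>A letter over S \<union> S^{-1} with S = {0..<n}: (s, False) is the generator s,
  (s, True) is its inverse.\<close>
type_synonym letter = "nat \<times> bool"

definition inv_letter :: "letter \<Rightarrow> letter" where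
  "inv_letter x = (fst x, \<not> snd x)"

definition letters :: "nat \<Rightarrow> letter set" where
  "letters n = {0..<n} \<times> UNIV"

definition tri_words :: "nat \<Rightarrow> (letter \<times> letter \<times> letter) set" where
  "tri_words n = {(a, b, c). a \<in> letters n \<and> b \<in> letters n \<and> c \<in> letters n \<and>
      a \<noteq> inv_letter b \<and> b \<noteq> inv_letter c \<and> c \<noteq> inv_letter a}"

text \<open>The random relator set: each candidate word is included independently with
  probability p; an outcome X encodes R = {w \<in> tri_words n. X w}.\<close>
definition random_triangular :: "nat \<Rightarrow> real \<Rightarrow> (letter \<times> letter \<times> letter \<Rightarrow> bool) pmf" where
  "random_triangular n p = Pi_pmf (tri_words n) False (\<lambda>_. bernoulli_pmf p)"

definition relators :: "nat \<Rightarrow> (letter \<times> letter \<times> letter \<Rightarrow> bool) \<Rightarrow> (letter \<times> letter \<times> letter) set" where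
  "relators n X = {w \<in> tri_words n. X w}"

definition gen_occurs :: "nat \<Rightarrow> letter \<times> letter \<times> letter \<Rightarrow> bool" where
  "gen_occurs s w = (case w of (a, b, c) \<Rightarrow>
      a \<in> {(s, False), (s, True)} \<or> b \<in> {(s, False), (s, True)} \<or> c \<in> {(s, False), (s, True)})"

end

theory Submission
  imports Defs "HOL-Real_Asymp.Real_Asymp"
begin

text \<open>Second moment method. Let \<open>E_s\<close> be the event that none of the at most \<open>24 n^2\<close>
  candidate words containing \<open>s\<close> or \<open>s^-1\<close> is chosen, and let \<open>N\<close> count the generators \<open>s\<close>
  for which \<open>E_s\<close> holds. Then \<open>\<mu> = E N \<ge> n (1 - p)^(24 n^2)\<close>, which grows like \<open>n^(1/49)\<close>.
  Two distinct generators occur together in at most \<open>48 n\<close> candidate words, so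
  \<open>P(E_s \<inter> E_t) \<le> P(E_s) P(E_t) / (1 - p)^(48 n)\<close> with \<open>(1 - p)^(48 n) \<longrightarrow> 1\<close>. Hence
  \<open>E N^2 \<le> \<mu> + (1 + o(1)) \<mu>^2\<close>, and Chebyshev's inequality gives \<open>P(N = 0) \<longrightarrow> 0\<close>.\<close>

lemma (in prob_space) prob_none_le_second_moment:
  fixes E :: "'i \<Rightarrow> 'a set"
  assumes E: "E ` I \<subseteq> events" and pos: "(\<Sum>s\<in>I. prob (E s)) > 0"
  shows "prob (space M - (\<Union>s\<in>I. E s))
           \<le> (\<Sum>s\<in>I. \<Sum>t\<in>I. prob (E s \<inter> E t)) / (\<Sum>s\<in>I. prob (E s))\<^sup>2 - 1"
proof -
  define \<mu> where "\<mu> = (\<Sum>s\<in>I. prob (E s))"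
  define N where "N x = (\<Sum>s\<in>I. indicator (E s) x :: real)" for x
  have N_sq: "N x ^ 2 = (\<Sum>s\<in>I. \<Sum>t\<in>I. indicator (E s \<inter> E t) x)" for x
    by (simp add: N_def power2_eq_square sum_product indicator_inter_arith)
  have int_N: "integrable M N"
    unfolding N_def using E by (auto simp: less_top[symmetric])
  have int_N_sq: "integrable M (\<lambda>x. N x ^ 2)"
    unfolding N_sq using E by (auto simp: less_top[symmetric])
  have EN: "expectation N = \<mu>"
    unfolding N_def \<mu>_def using E
    by (simp add: less_top[symmetric] Int_absorb2 sets.sets_into_space subset_eq)
  have "expectation (\<lambda>x. N x ^ 2) = (\<Sum>s\<in>I. \<Sum>t\<in>I. prob (E s \<inter> E t))"
    unfolding N_sq using E
    by (simp add: less_top[symmetric] Int_absorb2 sets.sets_into_space subset_eq)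
  moreover have "prob (space M - (\<Union>s\<in>I. E s)) \<le> prob {x \<in> space M. \<bar>N x - expectation N\<bar> \<ge> \<mu>}"
  proof (rule finite_measure_mono)
    show "space M - (\<Union>s\<in>I. E s) \<subseteq> {x \<in> space M. \<bar>N x - expectation N\<bar> \<ge> \<mu>}"
      using EN by (auto simp: N_def)
    show "{x \<in> space M. \<bar>N x - expectation N\<bar> \<ge> \<mu>} \<in> events"
      using borel_measurable_integrable[OF int_N] by measurable
  qed
  moreover have "prob {x \<in> space M. \<bar>N x - expectation N\<bar> \<ge> \<mu>} \<le> variance N / \<mu>\<^sup>2"
    using pos by (intro Chebyshev_inequality borel_measurable_integrable int_N int_N_sq)
      (simp add: \<mu>_def)
  moreover have "variance N = expectation (\<lambda>x. N x ^ 2) - \<mu>\<^sup>2"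
    using variance_eq[OF int_N int_N_sq] EN by simp
  ultimately show ?thesis
    using pos by (simp add: \<mu>_def diff_divide_distrib)
qed

lemma one_minus_power_ge_exp:
  fixes p :: real
  assumes "0 \<le> p" "p < 1"
  shows "exp (- (real m * p / (1 - p))) \<le> (1 - p) ^ m"
proof -
  have "ln (1 / (1 - p)) \<le> 1 / (1 - p) - 1"
    using assms by (intro ln_le_minus_one) auto
  also have "\<dots> = p / (1 - p)"
    using assms by (simp add: field_simps)
  finally have "- (p / (1 - p)) \<le> ln (1 - p)"
    using assms by (simp add: ln_div)
  then have "exp (- (real m * p / (1 - p))) \<le> exp (real m * ln (1 - p))"
    using mult_left_mono[of "- (p / (1 - p))" "ln (1 - p)" "real m"] by simp
  also have "\<dots> = (1 - p) ^ m"
    using assms by (simp add: exp_ln ln_realpow[symmetric])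
  finally show ?thesis .
qed

definition tri_words_with :: "nat \<Rightarrow> nat \<Rightarrow> (letter \<times> letter \<times> letter) set" where
  "tri_words_with n s = {w \<in> tri_words n. gen_occurs s w}"

lemma finite_letters [simp]: "finite (letters n)"
  by (simp add: letters_def)

lemma card_letters [simp]: "card (letters n) = 2 * n"
  by (simp add: letters_def card_cartesian_product card_UNIV_bool)

lemma finite_tri_words [simp]: "finite (tri_words n)"
  by (rule finite_subset[of _ "letters n \<times> letters n \<times> letters n"]) (auto simp: tri_words_def)

lemma tri_words_with_subset: "tri_words_with n s \<subseteq> tri_words n"
  by (auto simp: tri_words_with_def)

lemma finite_tri_words_with [simp]: "finite (tri_words_with n s)"
  using finite_subset[OF tri_words_with_subset] by simp

lemma gen_occurs_iff: "gen_occurs s (a, b, c) \<longleftrightarrow> fst a = s \<or> fst b = s \<or> fst c = s"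
  by (cases a; cases b; cases c) (auto simp: gen_occurs_def)

lemma card_tri_words_with_le: "card (tri_words_with n s) \<le> 24 * n\<^sup>2"
proof -
  define G where "G = {s} \<times> (UNIV :: bool set)"
  define L where "L = letters n"
  have "tri_words_with n s \<subseteq> (G \<times> L \<times> L) \<union> (L \<times> G \<times> L) \<union> (L \<times> L \<times> G)"
    by (auto simp: tri_words_with_def G_def L_def tri_words_def gen_occurs_iff)
  then have "card (tri_words_with n s) \<le> card ((G \<times> L \<times> L) \<union> (L \<times> G \<times> L) \<union> (L \<times> L \<times> G))"
    by (intro card_mono) (auto simp: G_def L_def)
  also have "\<dots> \<le> card (G \<times> L \<times> L) + card (L \<times> G \<times> L) + card (L \<times> L \<times> G)"
    by (meson card_Un_le add_right_mono le_trans)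
  also have "\<dots> = 24 * n\<^sup>2"
    by (simp add: card_cartesian_product card_UNIV_bool G_def L_def power2_eq_square)
  finally show ?thesis .
qed

lemma card_tri_words_with_Int_le:
  assumes "s \<noteq> t"
  shows "card (tri_words_with n s \<inter> tri_words_with n t) \<le> 48 * n"
proof -
  define G where "G = {s} \<times> (UNIV :: bool set)"
  define H where "H = {t} \<times> (UNIV :: bool set)"
  define L where "L = letters n"
  define U where "U = (G \<times> H \<times> L) \<union> (G \<times> L \<times> H) \<union> (H \<times> G \<times> L) \<union> (L \<times> G \<times> H)
                      \<union> (H \<times> L \<times> G) \<union> (L \<times> H \<times> G)"
  have "tri_words_with n s \<inter> tri_words_with n t \<subseteq> U"
  proof
    fix w assume w: "w \<in> tri_words_with n s \<inter> tri_words_with n t"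
    obtain a b c where abc: "w = (a, b, c)" by (cases w)
    have "x \<in> G \<longleftrightarrow> fst x = s" "x \<in> H \<longleftrightarrow> fst x = t" for x :: letter
      by (cases x; simp add: G_def H_def)+
    then show "w \<in> U"
      using w assms unfolding abc
      by (auto simp: U_def L_def tri_words_with_def tri_words_def gen_occurs_iff)
  qed
  then have "card (tri_words_with n s \<inter> tri_words_with n t) \<le> card U"
    by (intro card_mono) (auto simp: U_def G_def H_def L_def)
  also have "\<dots> \<le> card (G \<times> H \<times> L) + card (G \<times> L \<times> H) + card (H \<times> G \<times> L) + card (L \<times> G \<times> H)
                   + card (H \<times> L \<times> G) + card (L \<times> H \<times> G)"
    unfolding U_def by (meson card_Un_le add_right_mono le_trans)
  also have "\<dots> = 48 * n"
    by (simp add: card_cartesian_product card_UNIV_bool G_def H_def L_def)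
  finally show ?thesis .
qed

lemma prob_random_triangular_avoid:
  assumes "0 \<le> p" "p \<le> 1" "C \<subseteq> tri_words n"
  shows "measure_pmf.prob (random_triangular n p) {X. \<forall>w\<in>C. \<not> X w} = (1 - p) ^ card C"
proof -
  have eq: "{X. \<forall>w\<in>C. \<not> X w} = Pi (tri_words n) (\<lambda>w. if w \<in> C then {False} else UNIV)"
    using assms(3) by (auto simp: Pi_def)
  have "measure_pmf.prob (random_triangular n p) {X. \<forall>w\<in>C. \<not> X w}
     = (\<Prod>w\<in>tri_words n. measure_pmf.prob (bernoulli_pmf p) (if w \<in> C then {False} else UNIV))"
    unfolding eq random_triangular_def by (rule measure_Pi_pmf_Pi) simp
  also have "\<dots> = (\<Prod>w\<in>tri_words n. if w \<in> C then 1 - p else 1)"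
    using assms by (intro prod.cong) (auto simp: measure_pmf_single)
  also have "\<dots> = (1 - p) ^ card C"
    using assms(3) by (simp add: prod.If_cases inf.absorb2)
  finally show ?thesis .
qed

lemma power_card_tri_words_with_Un_le:
  fixes p :: real
  assumes "0 \<le> p" "p < 1" "s \<noteq> t"
  shows "(1 - p) ^ card (tri_words_with n s \<union> tri_words_with n t)
           \<le> (1 - p) ^ card (tri_words_with n s) * (1 - p) ^ card (tri_words_with n t)
               / (1 - p) ^ (48 * n)"
proof -
  let ?u = "(1 - p) ^ card (tri_words_with n s \<union> tri_words_with n t)"
  have "?u * (1 - p) ^ (48 * n) \<le> ?u * (1 - p) ^ card (tri_words_with n s \<inter> tri_words_with n t)"
    using assms card_tri_words_with_Int_le[OF assms(3), of n]
    by (intro mult_left_mono power_decreasing) auto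
  also have "\<dots> = (1 - p) ^ card (tri_words_with n s) * (1 - p) ^ card (tri_words_with n t)"
    by (simp add: card_Un_Int[of "tri_words_with n s" "tri_words_with n t"] power_add[symmetric])
  finally show ?thesis
    using assms by (simp add: pos_le_divide_eq)
qed

lemma prob_isolated_generator_ge:
  fixes n :: nat and p :: real
  assumes p: "0 \<le> p" "p < 1"
  defines "\<mu> \<equiv> \<Sum>s<n. (1 - p) ^ card (tri_words_with n s)"
  assumes \<mu>_pos: "\<mu> > 0"
  shows "2 - 1 / \<mu> - 1 / (1 - p) ^ (48 * n)
           \<le> measure_pmf.prob (random_triangular n p)
               {X. \<exists>s<n. \<forall>w\<in>relators n X. \<not> gen_occurs s w}"
proof -
  define q where "q = (1 - p) ^ (48 * n)"
  define P where "P s = (1 - p) ^ card (tri_words_with n s)" for s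
  define E where "E s = {X. \<forall>w\<in>tri_words_with n s. \<not> X w}" for s
  define M where "M = random_triangular n p"
  have prob_E: "measure_pmf.prob M (E s) = P s" for s
    unfolding E_def P_def M_def
    by (rule prob_random_triangular_avoid) (use p tri_words_with_subset in auto)
  have "measure_pmf.prob M (E s \<inter> E t) = (1 - p) ^ card (tri_words_with n s \<union> tri_words_with n t)"
    for s t
  proof -
    have "E s \<inter> E t = {X. \<forall>w\<in>tri_words_with n s \<union> tri_words_with n t. \<not> X w}"
      by (auto simp: E_def)
    then show ?thesis
      using p tri_words_with_subset by (simp add: M_def prob_random_triangular_avoid)
  qed
  then have "measure_pmf.prob M (E s \<inter> E t) \<le> (if s = t then P s else 0) + P s * P t / q" for s t
    using p power_card_tri_words_with_Un_le[of p s t n]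
    by (cases "s = t") (simp_all add: prob_E P_def q_def)
  then have "(\<Sum>s<n. \<Sum>t<n. measure_pmf.prob M (E s \<inter> E t))
               \<le> (\<Sum>s<n. \<Sum>t<n. (if s = t then P s else 0) + P s * P t / q)"
    by (intro sum_mono)
  also have "\<dots> = \<mu> + \<mu>\<^sup>2 / q"
    by (simp add: sum.distrib \<mu>_def P_def sum_product sum_divide_distrib power2_eq_square)
  finally have pair_sum: "(\<Sum>s<n. \<Sum>t<n. measure_pmf.prob M (E s \<inter> E t)) \<le> \<mu> + \<mu>\<^sup>2 / q" .
  have "measure_pmf.prob M (space (measure_pmf M) - (\<Union>s\<in>{..<n}. E s))
          \<le> (\<Sum>s<n. \<Sum>t<n. measure_pmf.prob M (E s \<inter> E t)) / \<mu>\<^sup>2 - 1"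
    using measure_pmf.prob_none_le_second_moment[of E "{..<n}" M] \<mu>_pos
    by (simp add: prob_E \<mu>_def P_def)
  also have "\<dots> \<le> (\<mu> + \<mu>\<^sup>2 / q) / \<mu>\<^sup>2 - 1"
    using pair_sum by (simp add: divide_right_mono)
  also have "\<dots> = 1 / \<mu> + 1 / q - 1"
    using \<mu>_pos p by (simp add: q_def field_simps power2_eq_square)
  finally have "1 - measure_pmf.prob M (\<Union>s\<in>{..<n}. E s) \<le> 1 / \<mu> + 1 / q - 1"
    by (subst (asm) measure_pmf.prob_compl) simp_all
  moreover have "{X. \<exists>s<n. \<forall>w\<in>relators n X. \<not> gen_occurs s w} = (\<Union>s\<in>{..<n}. E s)"
    by (auto simp: E_def relators_def tri_words_with_def)
  ultimately show ?thesis
    by (simp add: q_def M_def)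
qed

lemma expected_isolated_generators_ge:
  fixes p :: real
  assumes "n > 0" and p: "0 \<le> p" "p \<le> 1 / 50" and "p \<le> ln n / (25 * (real n)\<^sup>2)"
  shows "real n powr (1 / 49) \<le> (\<Sum>s<n. (1 - p) ^ card (tri_words_with n s))"
proof -
  have "1 / (1 - p) \<le> 50 / 49"
    using p by (simp add: field_simps)
  then have "real (24 * n\<^sup>2) * p / (1 - p) \<le> real (24 * n\<^sup>2) * p * (50 / 49)"
    using mult_left_mono[of "1 / (1 - p)" "50 / 49" "real (24 * n\<^sup>2) * p"] p by simp
  also have "\<dots> \<le> real (24 * n\<^sup>2) * (ln n / (25 * (real n)\<^sup>2)) * (50 / 49)"
    using assms by (intro mult_right_mono mult_left_mono) auto
  also have "\<dots> = (48 / 49) * ln n"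
    using assms by (simp add: field_simps)
  finally have "real n powr (- 48 / 49) \<le> exp (- (real (24 * n\<^sup>2) * p / (1 - p)))"
    using assms by (simp add: powr_def)
  also have "\<dots> \<le> (1 - p) ^ (24 * n\<^sup>2)"
    using p by (intro one_minus_power_ge_exp) auto
  finally have "real n * real n powr (- 48 / 49) \<le> (\<Sum>s<n. (1 - p) ^ (24 * n\<^sup>2))"
    by (simp add: mult_left_mono)
  also have "\<dots> \<le> (\<Sum>s<n. (1 - p) ^ card (tri_words_with n s))"
    using p card_tri_words_with_le by (intro sum_mono power_decreasing) auto
  finally show ?thesis
    using assms by (simp add: powr_mult_base)
qed

lemma power_one_minus_48n_ge:
  fixes p :: real
  assumes "n > 0" "0 \<le> p" "p \<le> ln n / (25 * (real n)\<^sup>2)" "p \<le> 1"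
  shows "1 - 48 * ln n / (25 * real n) \<le> (1 - p) ^ (48 * n)"
proof -
  have "real (48 * n) * p \<le> real (48 * n) * (ln n / (25 * (real n)\<^sup>2))"
    using assms by (intro mult_left_mono) auto
  also have "\<dots> = 48 * ln n / (25 * real n)"
    using assms by (simp add: field_simps power2_eq_square)
  finally show ?thesis
    using Bernoulli_inequality[of "- p" "48 * n"] assms by simp
qed

lemma prob_isolated_generator_ge_sparse:
  fixes p :: real
  assumes n: "n > 0" "48 * ln n / (25 * real n) < 1"
    and p: "0 \<le> p" "p \<le> 1 / 50" "p \<le> ln n / (25 * (real n)\<^sup>2)"
  shows "2 - 1 / real n powr (1 / 49) - 1 / (1 - 48 * ln n / (25 * real n))
           \<le> measure_pmf.prob (random_triangular n p)
               {X. \<exists>s<n. \<forall>w\<in>relators n X. \<not> gen_occurs s w}"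
proof -
  let ?\<mu> = "\<Sum>s<n. (1 - p) ^ card (tri_words_with n s)"
  have root_pos: "0 < real n powr (1 / 49)"
    using n by simp
  have \<mu>: "real n powr (1 / 49) \<le> ?\<mu>"
    using n p by (intro expected_isolated_generators_ge)
  with root_pos have \<mu>_pos: "0 < ?\<mu>"
    by linarith
  have q: "1 - 48 * ln n / (25 * real n) \<le> (1 - p) ^ (48 * n)"
    using n p by (intro power_one_minus_48n_ge) auto
  have q_pos: "0 < 1 - 48 * ln n / (25 * real n)"
    using n by simp
  have "1 / ?\<mu> \<le> 1 / real n powr (1 / 49)"
    using frac_le[of 1 1 "real n powr (1 / 49)" ?\<mu>] \<mu> root_pos by simp
  moreover have "1 / (1 - p) ^ (48 * n) \<le> 1 / (1 - 48 * ln n / (25 * real n))"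
    using frac_le[of 1 1 "1 - 48 * ln n / (25 * real n)"] q q_pos by simp
  ultimately have "2 - 1 / real n powr (1 / 49) - 1 / (1 - 48 * ln n / (25 * real n))
                     \<le> 2 - 1 / ?\<mu> - 1 / (1 - p) ^ (48 * n)"
    by linarith
  also have "\<dots> \<le> measure_pmf.prob (random_triangular n p)
                   {X. \<exists>s<n. \<forall>w\<in>relators n X. \<not> gen_occurs s w}"
    using \<mu>_pos p by (intro prob_isolated_generator_ge) auto
  finally show ?thesis .
qed

theorem lemma3p6:
  fixes p :: "nat \<Rightarrow> real"
  assumes "\<And>n. 0 \<le> p n"
    and "\<forall>\<^sub>F n in sequentially. p n \<le> ln (real n) / (25 * (real n)\<^sup>2)"
  shows "(\<lambda>n. measure_pmf.prob (random_triangular n (p n))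
            {X. \<exists>s<n. \<forall>w\<in>relators n X. \<not> gen_occurs s w}) \<longlonglongrightarrow> 1"
proof (rule tendsto_sandwich)
  define h where
    "h n = 2 - 1 / real n powr (1 / 49) - 1 / (1 - 48 * ln (real n) / (25 * real n))" for n :: nat
  have "\<forall>\<^sub>F n in sequentially. ln (real n) / (25 * (real n)\<^sup>2) \<le> 1 / 50"
    by real_asymp
  with assms(2) have "\<forall>\<^sub>F n in sequentially. p n \<le> 1 / 50"
    by eventually_elim linarith
  moreover have "\<forall>\<^sub>F n in sequentially. 48 * ln (real n) / (25 * real n) < 1"
    by real_asymp
  ultimately show "\<forall>\<^sub>F n in sequentially. h n \<le> measure_pmf.prob (random_triangular n (p n))
                     {X. \<exists>s<n. \<forall>w\<in>relators n X. \<not> gen_occurs s w}"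
    using assms(2) eventually_gt_at_top[of 0] unfolding h_def
    by eventually_elim (rule prob_isolated_generator_ge_sparse; simp add: assms(1))
  show "\<forall>\<^sub>F n in sequentially. measure_pmf.prob (random_triangular n (p n))
          {X. \<exists>s<n. \<forall>w\<in>relators n X. \<not> gen_occurs s w} \<le> 1"
    by simp
  show "(\<lambda>n. 1) \<longlonglongrightarrow> (1 :: real)"
    by simp
  show "h \<longlonglongrightarrow> 1"
    unfolding h_def by real_asymp
qed

end
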